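(* Let $\mathcal{M}=(S,A,AP,L,I)$ be an interval Markov decision process and let $s,t\in S$ with $s\sim_{(\forall)} t$. Then for every PCTL state formula $\varphi$ we have $s\models_{(\forall)}\varphi$ if and only if $t\models_{(\forall)}\varphi$.
   Context: An interval MDP (IMDP) is a tuple $(S,A,AP,L,I)$ with $S$ a finite set of states, $A$ a finite set of actions, $AP$ a finite set of atomic propositions, $L:S\to 2^{AP}$ a labelling, and $I:S\times A\times S\to\mathbb{I}$ where $\mathbb{I}$ is a set of subintervals of $[0,1]$. For $s\in S,a\in A$, write $s\xrightarrow{a}\mu$ if $\mu$ is a probability distribution on $S$ with $\mu(s')\in I(s,a,s')$ for all $s'$; the set $\Gamma_{s,a}=\{\mu\mid s\xrightarrow{a}\mu\}$ is required to be non-empty. Paths are sequences of states; $\mathrm{last}(\omega)$ is the last state of a finite path. A scheduler is a function $\sigma$ from finite paths to distributions over $A$; a nature is a function $\pi$ mapping a finite path $\omega$ and action $a$ to an element of $\Gamma_{\mathrm{last}(\omega),a}$. $\Sigma,\Pi$ denote the sets of all schedulers and natures. For a state $s$, $\sigma$, $\pi$, $\Pr^{\sigma,\pi}_s$ is the unique probability measure on infinite paths (with the cylinder $\sigma$-algebra) such that the cylinder of the one-state path $s'$ has probability $1$ if $s'=s$ and $0$ otherwise, and $\Pr^{\sigma,\pi}_s[\mathrm{Cyl}(\omega s')]=\Pr^{\sigma,\pi}_s[\mathrm{Cyl}(\omega)]\cdot\sum_{a\in A}\sigma(\omega)(a)\,\pi(\omega,a)(s')$. PCTL: state formulas $\varphi::=\mathit{true}\mid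 x\mid\neg\varphi\mid\varphi_1\wedge\varphi_2\mid \mathsf{P}_{\bowtie p}(\psi)$ and path formulas $\psi::=\mathsf{X}\varphi\mid\varphi_1\mathsf{U}\varphi_2\mid\varphi_1\mathsf{U}^{\le k}\varphi_2$, with $x\in AP$, rational $p\in[0,1]$, $\bowtie\in\{\le,<,\ge,>\}$, $k\in\mathbb{N}$. The relation $\models_{(\forall)}$: $s\models x$ iff $x\in L(s)$; negation and conjunction as usual; $s\models_{(\forall)}\mathsf{P}_{\bowtie p}(\psi)$ iff for all $\sigma\in\Sigma$ and all $\pi\in\Pi$, $\Pr^{\sigma,\pi}_s[\{\omega\mid\omega\models_{(\forall)}\psi\}]\bowtie p$. For an infinite path $\omega=s_1s_2\cdots$: $\omega\models\mathsf{X}\varphi$ iff $s_2\models\varphi$; $\omega\models\varphi_1\mathsf{U}^{\le k}\varphi_2$ iff there is $i\le k$ with $s_i\models\varphi_2$ and $s_j\models\varphi_1$ for all $j<i$; $\omega\models\varphi_1\mathsf{U}\varphi_2$ iff $\omega\models\varphi_1\mathsf{U}^{\le k}\varphi_2$ for some $k\in\mathbb{N}$. Cooperative bisimulation: write $s\to\mu$ if $\mu$ lies in the convex hull of $\bigcup_{a\in A}\Gamma_{s,a}$. An equivalence relation $R\subseteq S\times S$ is a probabilistic $(\forall)$-bisimulation if for all $(s,t)\in R$: $L(s)=L(t)$, and for each $s\to\mu$ there is $t\to\nu$ with $\mu(C)=\nu(C)$ for every equivalence class $C$ of $R$. $s\sim_{(\forall)}t$ iff some probabilistic $(\forall)$-bisimulation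 contains $(s,t)$. *)

theory Defs
  imports "HOL-Probability.Probability"
begin

text \<open>States are the finite type 's (S = UNIV), actions the finite type 'a (A = UNIV),
  atomic propositions the type 'ap; L :: 's => 'ap set is the labelling and
  I :: 's => 'a => 's => real set the interval function.\<close>

definition is_IMDP :: "('s::finite \<Rightarrow> 'a::finite \<Rightarrow> 's \<Rightarrow> real set) \<Rightarrow> bool" where
  "is_IMDP I \<longleftrightarrow>
     (\<forall>s a s'. is_interval (I s a s') \<and> I s a s' \<subseteq> {0..1}) \<and>
     (\<forall>s a. \<exists>\<mu>::'s pmf. \<forall>s'. pmf \<mu> s' \<in> I s a s')"

definition Gamma :: "('s \<Rightarrow> 'a \<Rightarrow> 's \<Rightarrow> real set) \<Rightarrow> 's \<Rightarrow> 'a \<Rightarrow> 's pmf set" where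
  "Gamma I s a = {\<mu>. \<forall>s'. pmf \<mu> s' \<in> I s a s'}"

text \<open>Finite paths are nonempty lists, infinite paths are streams.\<close>

type_synonym ('s,'a) scheduler = "'s list \<Rightarrow> 'a pmf"
type_synonym ('s,'a) nature = "'s list \<Rightarrow> 'a \<Rightarrow> 's pmf"

definition natures :: "('s \<Rightarrow> 'a \<Rightarrow> 's \<Rightarrow> real set) \<Rightarrow> ('s,'a) nature set" where
  "natures I = {\<pi>. \<forall>\<omega> a. \<omega> \<noteq> [] \<longrightarrow> \<pi> \<omega> a \<in> Gamma I (last \<omega>) a}"

definition Cyl :: "'s list \<Rightarrow> 's stream set" where
  "Cyl \<omega> = {x. stake (length \<omega>) x = \<omega>}"

definition path_measure_spec ::
  "'s::finite \<Rightarrow> ('s,'a::finite) scheduler \<Rightarrow> ('s,'a) nature \<Rightarrow> 's stream measure \<Rightarrow> bool" where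
  "path_measure_spec s \<sigma> \<pi> M \<longleftrightarrow>
     sets M = sets (stream_space (count_space UNIV)) \<and> prob_space M \<and>
     (\<forall>s'. measure M (Cyl [s']) = (if s' = s then 1 else 0)) \<and>
     (\<forall>\<omega> s'. \<omega> \<noteq> [] \<longrightarrow>
        measure M (Cyl (\<omega> @ [s'])) =
          measure M (Cyl \<omega>) * (\<Sum>a\<in>UNIV. pmf (\<sigma> \<omega>) a * pmf (\<pi> \<omega> a) s'))"

definition Pr :: "'s::finite \<Rightarrow> ('s,'a::finite) scheduler \<Rightarrow> ('s,'a) nature \<Rightarrow> 's stream measure" where
  "Pr s \<sigma> \<pi> = (THE M. path_measure_spec s \<sigma> \<pi> M)"

datatype cmp = LeC | LtC | GeC | GtC

fun cmp_holds :: "cmp \<Rightarrow> real \<Rightarrow> real \<Rightarrow> bool" where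
  "cmp_holds LeC x p = (x \<le> p)"
| "cmp_holds LtC x p = (x < p)"
| "cmp_holds GeC x p = (x \<ge> p)"
| "cmp_holds GtC x p = (x > p)"

datatype 'ap state_formula =
    TT
  | Atom 'ap
  | Neg "'ap state_formula"
  | And "'ap state_formula" "'ap state_formula"
  | Prob cmp rat "'ap path_formula"
and 'ap path_formula =
    Next "'ap state_formula"
  | Until "'ap state_formula" "'ap state_formula"
  | BUntil "'ap state_formula" nat "'ap state_formula"

primrec wf_state :: "'ap state_formula \<Rightarrow> bool"
  and wf_path :: "'ap path_formula \<Rightarrow> bool" where
  "wf_state TT = True"
| "wf_state (Atom x) = True"
| "wf_state (Neg f) = wf_state f"
| "wf_state (And f g) = (wf_state f \<and> wf_state g)"
| "wf_state (Prob c p \<psi>) = (0 \<le> p \<and> p \<le> 1 \<and> wf_path \<psi>)"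
| "wf_path (Next f) = wf_state f"
| "wf_path (Until f g) = (wf_state f \<and> wf_state g)"
| "wf_path (BUntil f k g) = (wf_state f \<and> wf_state g)"

text \<open>Satisfaction |=_(forall). Streams are 0-indexed: snth w j is s_{j+1} of the paper,
  so "i <= k with i >= 1" becomes "j < k".\<close>
primrec sat_state :: "('s::finite \<Rightarrow> 'a::finite \<Rightarrow> 's \<Rightarrow> real set) \<Rightarrow> ('s \<Rightarrow> 'ap set)
      \<Rightarrow> 's \<Rightarrow> 'ap state_formula \<Rightarrow> bool"
  and sat_path :: "('s::finite \<Rightarrow> 'a::finite \<Rightarrow> 's \<Rightarrow> real set) \<Rightarrow> ('s \<Rightarrow> 'ap set)
      \<Rightarrow> 's stream \<Rightarrow> 'ap path_formula \<Rightarrow> bool" where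
  "sat_state I L s TT = True"
| "sat_state I L s (Atom x) = (x \<in> L s)"
| "sat_state I L s (Neg f) = (\<not> sat_state I L s f)"
| "sat_state I L s (And f g) = (sat_state I L s f \<and> sat_state I L s g)"
| "sat_state I L s (Prob c p \<psi>) =
     (\<forall>\<sigma> :: ('s,'a) scheduler. \<forall>\<pi> \<in> natures I.
        cmp_holds c (measure (Pr s \<sigma> \<pi>) {w. sat_path I L w \<psi>}) (of_rat p))"
| "sat_path I L w (Next f) = sat_state I L (w !! 1) f"
| "sat_path I L w (Until f g) =
     (\<exists>j. sat_state I L (w !! j) g \<and> (\<forall>i<j. sat_state I L (w !! i) f))"
| "sat_path I L w (BUntil f k g) =
     (\<exists>j<k. sat_state I L (w !! j) g \<and> (\<forall>i<j. sat_state I L (w !! i) f))"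

definition pmf_vec :: "'s::finite pmf \<Rightarrow> real ^ 's" where
  "pmf_vec \<mu> = (\<chi> x. pmf \<mu> x)"

definition coop_step :: "('s::finite \<Rightarrow> 'a::finite \<Rightarrow> 's \<Rightarrow> real set) \<Rightarrow> 's \<Rightarrow> 's pmf \<Rightarrow> bool" where
  "coop_step I s \<mu> \<longleftrightarrow> pmf_vec \<mu> \<in> convex hull (\<Union>a. pmf_vec ` Gamma I s a)"

definition forall_bisimulation ::
  "('s::finite \<Rightarrow> 'a::finite \<Rightarrow> 's \<Rightarrow> real set) \<Rightarrow> ('s \<Rightarrow> 'ap set) \<Rightarrow> 's rel \<Rightarrow> bool" where
  "forall_bisimulation I L R \<longleftrightarrow> equiv UNIV R \<and>
     (\<forall>(s,t)\<in>R. L s = L t \<and>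
        (\<forall>\<mu>. coop_step I s \<mu> \<longrightarrow>
           (\<exists>\<nu>. coop_step I t \<nu> \<and>
              (\<forall>C\<in>UNIV // R. measure_pmf.prob \<mu> C = measure_pmf.prob \<nu> C))))"

definition forall_bisimilar ::
  "('s::finite \<Rightarrow> 'a::finite \<Rightarrow> 's \<Rightarrow> real set) \<Rightarrow> ('s \<Rightarrow> 'ap set) \<Rightarrow> 's \<Rightarrow> 's \<Rightarrow> bool" where
  "forall_bisimilar I L s t \<longleftrightarrow> (\<exists>R. forall_bisimulation I L R \<and> (s,t) \<in> R)"

end

theory Submission
  imports Defs
begin

text \<open>Let f send each state to its class. A scheduler and a nature from s induce a
  history-dependent kernel whose successor distributions are cooperative steps, which form a
  convex set. From t one builds a kernel that, at a history h, mixes bisimulation matches of the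
  successor distributions of all histories lumped like h, weighted by their probabilities. Both
  kernels then give every sequence of classes the same probability, so the two path measures
  agree on every bisimulation-closed event; and every kernel of cooperative steps is induced by
  some scheduler and nature.\<close>

section \<open>Path measures of history-dependent kernels\<close>

definition prefix_prob :: "'s \<Rightarrow> ('s list \<Rightarrow> 's pmf) \<Rightarrow> 's list \<Rightarrow> real" where
  "prefix_prob s K \<omega> = (if \<omega> = [] then 1 else
     of_bool (hd \<omega> = s) * (\<Prod>k\<in>{1..<length \<omega>}. pmf (K (take k \<omega>)) (\<omega> ! k)))"

lemma prefix_prob_singleton [simp]: "prefix_prob s K [x] = of_bool (x = s)"
  by (simp add: prefix_prob_def)

lemma prefix_prob_snoc:
  assumes "\<omega> \<noteq> []"
  shows "prefix_prob s K (\<omega> @ [x]) = prefix_prob s K \<omega> * pmf (K \<omega>) x"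
proof -
  let ?n = "length \<omega>"
  have "{1..<length (\<omega> @ [x])} = insert ?n {1..<?n}"
    using assms by (cases \<omega>) auto
  moreover have "(\<Prod>k\<in>{1..<?n}. pmf (K (take k (\<omega> @ [x]))) ((\<omega> @ [x]) ! k))
      = (\<Prod>k\<in>{1..<?n}. pmf (K (take k \<omega>)) (\<omega> ! k))"
    by (intro prod.cong) (auto simp: nth_append)
  ultimately show ?thesis
    using assms by (simp add: prefix_prob_def)
qed

lemma prefix_prob_nonneg: "prefix_prob s K \<omega> \<ge> 0"
  by (simp add: prefix_prob_def prod_nonneg)

lemma Cyl_eq_sstart: "Cyl \<omega> = sstart UNIV \<omega>"
proof (induction \<omega>)
  case Nil
  then show ?case by (simp add: Cyl_def)
next
  case (Cons a \<omega>)
  have "x \<in> Cyl (a # \<omega>) \<longleftrightarrow> x \<in> sstart UNIV (a # \<omega>)" for x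
    using Cons by (cases x) (auto simp: Cyl_def)
  then show ?case by blast
qed

lemma sets_Cyl [measurable]: "Cyl \<omega> \<in> sets (stream_space (count_space UNIV))"
  by (simp add: Cyl_eq_sstart sstart_sets)

text \<open>Existence of the path measure: draw independently, for every history h, a successor
  x h from K h, and follow the resulting deterministic choice function from s.\<close>

primrec choice_prefix :: "'s \<Rightarrow> ('s list \<Rightarrow> 's) \<Rightarrow> nat \<Rightarrow> 's list" where
  "choice_prefix s x 0 = [s]"
| "choice_prefix s x (Suc n) = choice_prefix s x n @ [x (choice_prefix s x n)]"

lemma length_choice_prefix [simp]: "length (choice_prefix s x n) = Suc n"
  by (induction n) auto

definition choice_stream :: "'s \<Rightarrow> ('s list \<Rightarrow> 's) \<Rightarrow> 's stream" where
  "choice_stream s x = to_stream (\<lambda>n. last (choice_prefix s x n))"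

lemma stake_choice_stream: "stake (Suc n) (choice_stream s x) = choice_prefix s x n"
proof (induction n)
  case 0
  then show ?case by (simp add: choice_stream_def to_stream_def)
next
  case (Suc n)
  have "stake (Suc (Suc n)) (choice_stream s x)
      = stake (Suc n) (choice_stream s x) @ [choice_stream s x !! Suc n]"
    by (rule stake_Suc)
  also have "\<dots> = choice_prefix s x (Suc n)"
    using Suc by (simp add: choice_stream_def to_stream_def)
  finally show ?case .
qed

lemma choice_prefix_eq_iff:
  assumes "length \<omega> = Suc n"
  shows "choice_prefix s x n = \<omega> \<longleftrightarrow> hd \<omega> = s \<and> (\<forall>k\<in>{1..n}. x (take k \<omega>) = \<omega> ! k)"
  using assms
proof (induction n arbitrary: \<omega>)
  case 0
  then obtain a where "\<omega> = [a]" by (cases \<omega>) auto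
  then show ?case by auto
next
  case (Suc n)
  then obtain \<omega>' y where \<omega>: "\<omega> = \<omega>' @ [y]" by (cases \<omega> rule: rev_cases) auto
  with Suc.prems have len: "length \<omega>' = Suc n" by simp
  have "{1..Suc n} = insert (Suc n) {1..n}" by auto
  moreover have "\<forall>k\<in>{1..n}. take k \<omega> = take k \<omega>' \<and> \<omega> ! k = \<omega>' ! k"
    "take (Suc n) \<omega> = \<omega>'" "\<omega> ! Suc n = y"
    using \<omega> len by (auto simp: nth_append)
  moreover have "hd \<omega> = hd \<omega>'"
    using \<omega> len by (cases \<omega>') auto
  ultimately show ?case
    using Suc.IH[OF len] \<omega> by auto
qed

definition choice_space :: "('s list \<Rightarrow> 's pmf) \<Rightarrow> ('s list \<Rightarrow> 's) measure" where
  "choice_space K = PiM UNIV (\<lambda>h. measure_pmf (K h))"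

lemma product_prob_space_choice: "product_prob_space (\<lambda>h. measure_pmf (K h))"
  by (rule product_prob_spaceI) (rule prob_space_measure_pmf)

lemma prob_space_choice_space: "prob_space (choice_space K)"
proof -
  interpret product_prob_space "\<lambda>h. measure_pmf (K h)" UNIV
    by (rule product_prob_space_choice)
  show ?thesis
    unfolding choice_space_def by (rule prob_space_axioms)
qed

lemma measurable_choice_prefix:
  fixes K :: "'s::countable list \<Rightarrow> 's pmf"
  shows "(\<lambda>x. choice_prefix s x n) \<in> measurable (choice_space K) (count_space UNIV)"
proof (induction n)
  case 0
  show ?case by simp
next
  case (Suc n)
  have "(\<lambda>x. x h) \<in> measurable (choice_space K) (count_space UNIV)" for h
    using measurable_component_singleton[of h UNIV "\<lambda>h. measure_pmf (K h)"]
      measurable_cong_sets[OF refl sets_measure_pmf_count_space]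
    unfolding choice_space_def by blast
  then have "(\<lambda>x. h @ [x h]) \<in> measurable (choice_space K) (count_space UNIV)" for h
    by (rule measurable_compose[OF _ measurable_count_space])
  from measurable_compose_countable'[OF this Suc]
  show ?case by simp
qed

lemma measurable_choice_stream:
  fixes K :: "'s::countable list \<Rightarrow> 's pmf"
  shows "choice_stream s \<in> measurable (choice_space K) (stream_space (count_space UNIV))"
proof (rule measurable_stream_space2)
  fix n
  show "(\<lambda>x. choice_stream s x !! n) \<in> measurable (choice_space K) (count_space UNIV)"
    using measurable_compose[OF measurable_choice_prefix measurable_count_space[of last]]
    by (simp add: choice_stream_def to_stream_def)
qed

lemma measure_choice_prefix:
  assumes len: "length \<omega> = Suc n"
  shows "measure (choice_space K) {x \<in> space (choice_space K). choice_prefix s x n = \<omega>}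
    = prefix_prob s K \<omega>"
proof (cases "hd \<omega> = s")
  case False
  then show ?thesis
    using choice_prefix_eq_iff[OF len] len by (auto simp: prefix_prob_def)
next
  case True
  interpret P: product_prob_space "\<lambda>h. measure_pmf (K h)" UNIV
    by (rule product_prob_space_choice)
  define J where "J = (\<lambda>k. take k \<omega>) ` {1..n}"
  have inj: "inj_on (\<lambda>k. take k \<omega>) {1..n}"
    by (rule inj_onI) (metis atLeastAtMost_iff le_SucI len length_take min.absorb2)
  have "{x \<in> space (choice_space K). choice_prefix s x n = \<omega>}
      = {x \<in> space (choice_space K). \<forall>i\<in>J. x i \<in> {\<omega> ! length i}}"
    using choice_prefix_eq_iff[OF len] True len by (auto simp: J_def)
  then have "emeasure (choice_space K) {x \<in> space (choice_space K). choice_prefix s x n = \<omega>}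
      = (\<Prod>i\<in>J. emeasure (measure_pmf (K i)) {\<omega> ! length i})"
    unfolding choice_space_def by (simp only:) (rule P.emeasure_PiM_Collect, auto simp: J_def)
  also have "\<dots> = (\<Prod>k\<in>{1..n}. ennreal (pmf (K (take k \<omega>)) (\<omega> ! k)))"
    unfolding J_def prod.reindex[OF inj]
    using len by (intro prod.cong) (auto simp: emeasure_pmf_single)
  also have "\<dots> = ennreal (\<Prod>k\<in>{1..n}. pmf (K (take k \<omega>)) (\<omega> ! k))"
    by (rule prod_ennreal) simp
  finally show ?thesis
    using True len P.emeasure_eq_measure
    by (auto simp: prefix_prob_def choice_space_def prod_nonneg atLeastLessThanSuc_atLeastAtMost)
qed

lemma exists_path_measure:
  fixes K :: "'s::countable list \<Rightarrow> 's pmf"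
  shows "\<exists>M. sets M = sets (stream_space (count_space UNIV)) \<and> prob_space M \<and>
     (\<forall>\<omega>. \<omega> \<noteq> [] \<longrightarrow> measure M (Cyl \<omega>) = prefix_prob s K \<omega>)"
proof (intro exI conjI allI impI)
  let ?M = "distr (choice_space K) (stream_space (count_space UNIV)) (choice_stream s)"
  show "sets ?M = sets (stream_space (count_space UNIV))" by simp
  show "prob_space ?M"
    by (rule prob_space.prob_space_distr[OF prob_space_choice_space measurable_choice_stream])
  fix \<omega> :: "'s list"
  assume "\<omega> \<noteq> []"
  then obtain n where len: "length \<omega> = Suc n" by (cases \<omega>) auto
  have "choice_stream s -` Cyl \<omega> \<inter> space (choice_space K)
      = {x \<in> space (choice_space K). choice_prefix s x n = \<omega>}"
    using stake_choice_stream[of n s] len by (auto simp: Cyl_def)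
  then show "measure ?M (Cyl \<omega>) = prefix_prob s K \<omega>"
    by (simp add: measure_distr[OF measurable_choice_stream] measure_choice_prefix[OF len])
qed

definition sched_kernel :: "('s, 'a) scheduler \<Rightarrow> ('s, 'a) nature \<Rightarrow> 's list \<Rightarrow> 's pmf" where
  "sched_kernel \<sigma> \<pi> \<omega> = bind_pmf (\<sigma> \<omega>) (\<pi> \<omega>)"

lemma pmf_sched_kernel:
  fixes \<sigma> :: "('s, 'a::finite) scheduler"
  shows "pmf (sched_kernel \<sigma> \<pi> \<omega>) x = (\<Sum>a\<in>UNIV. pmf (\<sigma> \<omega>) a * pmf (\<pi> \<omega> a) x)"
  unfolding sched_kernel_def pmf_bind by (subst integral_measure_pmf[of UNIV]) auto

lemma path_measure_spec_iff:
  "path_measure_spec s \<sigma> \<pi> M \<longleftrightarrow> sets M = sets (stream_space (count_space UNIV)) \<and> prob_space M \<and>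
     (\<forall>\<omega>. \<omega> \<noteq> [] \<longrightarrow> measure M (Cyl \<omega>) = prefix_prob s (sched_kernel \<sigma> \<pi>) \<omega>)"
  (is "?spec \<longleftrightarrow> ?sets \<and> ?prob \<and> ?Cyl")
proof
  assume ?spec
  moreover have "measure M (Cyl \<omega>) = prefix_prob s (sched_kernel \<sigma> \<pi>) \<omega>" if "\<omega> \<noteq> []" for \<omega>
    using that
  proof (induction \<omega> rule: rev_induct)
    case (snoc x \<omega>)
    with \<open>?spec\<close> show ?case
      by (cases "\<omega> = []") (auto simp: path_measure_spec_def prefix_prob_snoc pmf_sched_kernel)
  qed simp
  ultimately show "?sets \<and> ?prob \<and> ?Cyl"
    by (simp add: path_measure_spec_def)
next
  assume "?sets \<and> ?prob \<and> ?Cyl"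
  then show ?spec
    unfolding path_measure_spec_def
    by (auto simp: prefix_prob_snoc pmf_sched_kernel)
qed

lemma path_measure_spec_Pr:
  fixes \<sigma> :: "('s::finite, 'a::finite) scheduler"
  shows "path_measure_spec s \<sigma> \<pi> (Pr s \<sigma> \<pi>)"
proof -
  obtain M where M: "path_measure_spec s \<sigma> \<pi> M"
    using exists_path_measure[where K = "sched_kernel \<sigma> \<pi>" and s = s]
    by (auto simp: path_measure_spec_iff)
  have "N = M" if N: "path_measure_spec s \<sigma> \<pi> N" for N
  proof (rule stream_space_eq_sstart[of UNIV])
    interpret N: prob_space N
      using N by (simp add: path_measure_spec_iff)
    interpret M: prob_space M
      using M by (simp add: path_measure_spec_iff)
    fix \<omega> :: "'s list"
    assume "\<omega> \<noteq> []"
    then show "emeasure N (sstart UNIV \<omega>) = emeasure M (sstart UNIV \<omega>)"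
      using M N by (simp add: path_measure_spec_iff N.emeasure_eq_measure
          M.emeasure_eq_measure flip: Cyl_eq_sstart)
  qed (use M N in \<open>simp_all add: path_measure_spec_iff\<close>)
  with M show ?thesis
    unfolding Pr_def by (rule theI)
qed

lemma
  fixes \<sigma> :: "('s::finite, 'a::finite) scheduler"
  shows prob_space_Pr: "prob_space (Pr s \<sigma> \<pi>)"
    and sets_Pr: "sets (Pr s \<sigma> \<pi>) = sets (stream_space (count_space UNIV))"
    and measure_Pr_Cyl: "\<omega> \<noteq> [] \<Longrightarrow> measure (Pr s \<sigma> \<pi>) (Cyl \<omega>) = prefix_prob s (sched_kernel \<sigma> \<pi>) \<omega>"
  using path_measure_spec_Pr[of s \<sigma> \<pi>] by (simp_all add: path_measure_spec_iff)

lemma space_Pr: "space (Pr s \<sigma> \<pi>) = UNIV"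
  for \<sigma> :: "('s::finite, 'a::finite) scheduler"
  using sets_eq_imp_space_eq[OF sets_Pr[of s \<sigma> \<pi>]] by (simp add: space_stream_space)

section \<open>Cooperative steps\<close>

lemma pmf_vec_nth [simp]: "pmf_vec \<mu> $ x = pmf \<mu> x"
  by (simp add: pmf_vec_def)

lemma pmf_vec_inject: "pmf_vec \<mu> = pmf_vec \<nu> \<longleftrightarrow> \<mu> = \<nu>"
  by (simp add: vec_eq_iff pmf_eq_iff)

lemma range_pmf_vec:
  "range pmf_vec = {v :: real ^ 's::finite. (\<forall>x. v $ x \<ge> 0) \<and> (\<Sum>x\<in>UNIV. v $ x) = 1}"
proof (intro equalityI subsetI)
  fix v :: "real ^ 's"
  assume "v \<in> {v. (\<forall>x. v $ x \<ge> 0) \<and> (\<Sum>x\<in>UNIV. v $ x) = 1}"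
  then have nonneg: "\<And>x. v $ x \<ge> 0" and sum: "(\<Sum>x\<in>UNIV. v $ x) = 1" by auto
  have "(\<integral>\<^sup>+x. ennreal (v $ x) \<partial>count_space UNIV) = 1"
    using nonneg sum by (simp add: nn_integral_count_space_finite sum_ennreal)
  then have "pmf_vec (embed_pmf (\<lambda>x. v $ x)) = v"
    by (simp add: vec_eq_iff pmf_embed_pmf[OF nonneg])
  then show "v \<in> range pmf_vec" by (metis rangeI)
qed (auto simp: sum_pmf_eq_1)

lemma convex_range_pmf_vec: "convex (range (pmf_vec :: 's::finite pmf \<Rightarrow> _))"
  unfolding range_pmf_vec convex_def
  by (auto simp: sum.distrib simp flip: sum_distrib_left)

lemma pmf_vec_bind_pmf:
  fixes l :: "'a::finite pmf" and \<mu> :: "'a \<Rightarrow> 's::finite pmf"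
  shows "pmf_vec (bind_pmf l \<mu>) = (\<Sum>a\<in>UNIV. pmf l a *\<^sub>R pmf_vec (\<mu> a))"
  by (simp add: vec_eq_iff pmf_bind integral_measure_pmf[of UNIV])

lemma convex_Gamma:
  fixes I :: "'s::finite \<Rightarrow> 'a::finite \<Rightarrow> 's \<Rightarrow> real set"
  assumes "is_IMDP I"
  shows "convex (pmf_vec ` Gamma I x a)"
proof (rule convexI)
  fix u v :: "real ^ 's" and p q :: real
  assume "u \<in> pmf_vec ` Gamma I x a" "v \<in> pmf_vec ` Gamma I x a"
    and pq: "0 \<le> p" "0 \<le> q" "p + q = 1"
  then obtain \<mu> \<nu> where \<mu>: "\<mu> \<in> Gamma I x a" "u = pmf_vec \<mu>"
    and \<nu>: "\<nu> \<in> Gamma I x a" "v = pmf_vec \<nu>" by blast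
  obtain \<rho> where \<rho>: "p *\<^sub>R u + q *\<^sub>R v = pmf_vec \<rho>"
    using convexD[OF convex_range_pmf_vec, of u v p q] pq \<mu> \<nu> by auto
  have "pmf \<rho> y \<in> I x a y" for y
  proof -
    have "convex (I x a y)"
      using assms by (simp add: is_IMDP_def is_interval_convex)
    then have "p * pmf \<mu> y + q * pmf \<nu> y \<in> I x a y"
      using \<mu> \<nu> pq unfolding convex_def Gamma_def by auto
    moreover have "pmf \<rho> y = p * pmf \<mu> y + q * pmf \<nu> y"
      using arg_cong[OF \<rho>, of "\<lambda>w. w $ y"] \<mu> \<nu> by simp
    ultimately show ?thesis by simp
  qed
  with \<rho> show "p *\<^sub>R u + q *\<^sub>R v \<in> pmf_vec ` Gamma I x a"
    by (auto simp: Gamma_def)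
qed

lemma Gamma_nonempty: "is_IMDP I \<Longrightarrow> Gamma I x a \<noteq> {}"
  by (auto simp: is_IMDP_def Gamma_def)

text \<open>The sets Gamma I x a are convex and there are finitely many actions, so the convex hull of
  their union consists of the action-weighted mixtures of their elements.\<close>

lemma coop_step_iff_bind:
  fixes I :: "'s::finite \<Rightarrow> 'a::finite \<Rightarrow> 's \<Rightarrow> real set"
  assumes "is_IMDP I"
  shows "coop_step I x \<nu> \<longleftrightarrow> (\<exists>l \<mu>. (\<forall>a. \<mu> a \<in> Gamma I x a) \<and> \<nu> = bind_pmf l \<mu>)"
proof -
  have hull: "convex hull (\<Union>a. pmf_vec ` Gamma I x a) =
    {\<Sum>a\<in>UNIV. c a *\<^sub>R v a | c v. (\<forall>a\<in>UNIV. c a \<ge> 0) \<and> sum c UNIV = 1 \<and>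
       (\<forall>a\<in>UNIV. v a \<in> pmf_vec ` Gamma I x a)}"
    by (rule convex_hull_finite_union) (use convex_Gamma[OF assms] Gamma_nonempty[OF assms] in auto)
  show ?thesis
  proof
    assume "coop_step I x \<nu>"
    then obtain c v where cv: "pmf_vec \<nu> = (\<Sum>a\<in>UNIV. c a *\<^sub>R v a)" "\<forall>a. c a \<ge> 0"
      "sum c UNIV = 1" "\<forall>a. v a \<in> pmf_vec ` Gamma I x a"
      unfolding coop_step_def hull by auto
    have "\<forall>a. \<exists>m. m \<in> Gamma I x a \<and> v a = pmf_vec m"
      using cv(4) by blast
    then obtain \<mu> where \<mu>: "\<And>a. \<mu> a \<in> Gamma I x a \<and> v a = pmf_vec (\<mu> a)"
      by metis
    have "(\<chi> a. c a) \<in> range (pmf_vec :: 'a pmf \<Rightarrow> _)"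
      using cv(2,3) by (simp add: range_pmf_vec)
    then obtain l :: "'a pmf" where l: "pmf_vec l = (\<chi> a. c a)"
      by (metis rangeE)
    have "pmf_vec \<nu> = pmf_vec (bind_pmf l \<mu>)"
      unfolding pmf_vec_bind_pmf cv(1) using \<mu> l by (simp add: vec_eq_iff)
    with \<mu> show "\<exists>l \<mu>. (\<forall>a. \<mu> a \<in> Gamma I x a) \<and> \<nu> = bind_pmf l \<mu>"
      by (auto simp: pmf_vec_inject)
  next
    assume "\<exists>l \<mu>. (\<forall>a. \<mu> a \<in> Gamma I x a) \<and> \<nu> = bind_pmf l \<mu>"
    then obtain l \<mu> where "\<forall>a. \<mu> a \<in> Gamma I x a" "\<nu> = bind_pmf l \<mu>"
      by blast
    then show "coop_step I x \<nu>"
      unfolding coop_step_def hull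
      by (auto intro!: exI[of _ "pmf l"] exI[of _ "\<lambda>a. pmf_vec (\<mu> a)"]
          simp: pmf_vec_bind_pmf sum_pmf_eq_1)
  qed
qed

lemma coop_step_exists:
  fixes I :: "'s::finite \<Rightarrow> 'a::finite \<Rightarrow> 's \<Rightarrow> real set"
  assumes "is_IMDP I"
  shows "\<exists>\<nu>. coop_step I x \<nu>"
proof -
  have "\<forall>a. \<exists>m. m \<in> Gamma I x a"
    using Gamma_nonempty[OF assms] by blast
  then obtain \<mu> where "\<And>a. \<mu> a \<in> Gamma I x a"
    by metis
  then show ?thesis
    using coop_step_iff_bind[OF assms] by blast
qed

lemma coop_step_sched_kernel:
  fixes I :: "'s::finite \<Rightarrow> 'a::finite \<Rightarrow> 's \<Rightarrow> real set"
  assumes "is_IMDP I" "\<pi> \<in> natures I" "\<omega> \<noteq> []"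
  shows "coop_step I (last \<omega>) (sched_kernel \<sigma> \<pi> \<omega>)"
  using assms by (auto simp: coop_step_iff_bind natures_def sched_kernel_def)

lemma sched_kernel_of_coop_kernel:
  fixes I :: "'s::finite \<Rightarrow> 'a::finite \<Rightarrow> 's \<Rightarrow> real set"
  assumes "is_IMDP I" "\<And>h. h \<noteq> [] \<Longrightarrow> coop_step I (last h) (K h)"
  shows "\<exists>(\<sigma> :: ('s, 'a) scheduler) \<pi>. \<pi> \<in> natures I \<and> sched_kernel \<sigma> \<pi> = K"
proof -
  have "\<exists>l\<mu>. (h \<noteq> [] \<longrightarrow> (\<forall>a. snd l\<mu> a \<in> Gamma I (last h) a)) \<and>
      K h = bind_pmf (fst l\<mu>) (snd l\<mu>)" for h
  proof (cases "h = []")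
    case True
    show ?thesis
      by (rule exI[of _ "(return_pmf undefined, \<lambda>_. K h)"]) (simp add: True)
  next
    case False
    then obtain l \<mu> where "\<forall>a. \<mu> a \<in> Gamma I (last h) a" "K h = bind_pmf l \<mu>"
      using assms coop_step_iff_bind by blast
    then show ?thesis
      by (intro exI[of _ "(l, \<mu>)"]) simp
  qed
  then obtain l\<mu> where l\<mu>: "\<And>h. (h \<noteq> [] \<longrightarrow> (\<forall>a. snd (l\<mu> h) a \<in> Gamma I (last h) a)) \<and>
      K h = bind_pmf (fst (l\<mu> h)) (snd (l\<mu> h))"
    by metis
  have "(\<lambda>h. snd (l\<mu> h)) \<in> natures I"
    using l\<mu> by (simp add: natures_def)
  moreover have "sched_kernel (\<lambda>h. fst (l\<mu> h)) (\<lambda>h. snd (l\<mu> h)) = K"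
    using l\<mu> by (simp add: sched_kernel_def fun_eq_iff)
  ultimately show ?thesis
    by blast
qed

lemma coop_step_mixture:
  assumes "finite A" "\<And>i. i \<in> A \<Longrightarrow> w i \<ge> 0" "sum w A = 1"
    and "\<And>i. i \<in> A \<Longrightarrow> coop_step I x (\<nu> i)"
  shows "\<exists>\<nu>'. coop_step I x \<nu>' \<and> (\<forall>y. pmf \<nu>' y = (\<Sum>i\<in>A. w i * pmf (\<nu> i) y))"
proof -
  let ?v = "\<Sum>i\<in>A. w i *\<^sub>R pmf_vec (\<nu> i)"
  have "?v \<in> range pmf_vec"
    by (rule convex_sum[OF assms(1) convex_range_pmf_vec assms(3,2)]) auto
  then obtain \<nu>' where \<nu>': "pmf_vec \<nu>' = ?v" by auto
  have "?v \<in> convex hull (\<Union>a. pmf_vec ` Gamma I x a)"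
    by (rule convex_sum[OF assms(1) convex_convex_hull assms(3,2)])
      (use assms(4) in \<open>auto simp: coop_step_def\<close>)
  with \<nu>' have "coop_step I x \<nu>'"
    by (simp add: coop_step_def)
  moreover have "pmf \<nu>' y = (\<Sum>i\<in>A. w i * pmf (\<nu> i) y)" for y
    using arg_cong[OF \<nu>', of "\<lambda>v. v $ y"] by simp
  ultimately show ?thesis by blast
qed

section \<open>Lumping states\<close>

definition coop_lumpable :: "('s::finite \<Rightarrow> 'a::finite \<Rightarrow> 's \<Rightarrow> real set) \<Rightarrow> ('s \<Rightarrow> 'b) \<Rightarrow> bool" where
  "coop_lumpable I f \<longleftrightarrow> (\<forall>x y \<mu>. f x = f y \<longrightarrow> coop_step I x \<mu> \<longrightarrow>
     (\<exists>\<nu>. coop_step I y \<nu> \<and> map_pmf f \<nu> = map_pmf f \<mu>))"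

lemma forall_bisimulation_lumpable:
  fixes I :: "'s::finite \<Rightarrow> 'a::finite \<Rightarrow> 's \<Rightarrow> real set"
  assumes bisim: "forall_bisimulation I L R"
  shows "coop_lumpable I (\<lambda>x. R `` {x})"
  unfolding coop_lumpable_def
proof (intro allI impI)
  fix x y \<mu>
  assume xy: "R `` {x} = R `` {y}" and \<mu>: "coop_step I x \<mu>"
  have eqv: "equiv UNIV R"
    using bisim by (simp add: forall_bisimulation_def)
  with xy have "(x, y) \<in> R"
    by (simp add: eq_equiv_class_iff)
  then obtain \<nu> where \<nu>: "coop_step I y \<nu>"
    and classes: "\<forall>C\<in>UNIV // R. measure_pmf.prob \<mu> C = measure_pmf.prob \<nu> C"
    using bisim \<mu> unfolding forall_bisimulation_def by fast
  have "pmf (map_pmf (\<lambda>x. R `` {x}) \<nu>) C = pmf (map_pmf (\<lambda>x. R `` {x}) \<mu>) C" for C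
  proof (cases "C \<in> UNIV // R")
    case True
    then obtain z where z: "C = R `` {z}"
      by (rule quotientE)
    have "R `` {x} = R `` {z} \<longleftrightarrow> x \<in> R `` {z}" for x
      using eqv by (metis Image_singleton_iff UNIV_I eq_equiv_class_iff equiv_def symD)
    with z have "(\<lambda>x. R `` {x}) -` {C} = C"
      by auto
    with True classes show ?thesis
      by (simp add: pmf_map)
  next
    case False
    then have "(\<lambda>x. R `` {x}) -` {C} = {}"
      unfolding quotient_def by blast
    then show ?thesis
      by (simp add: pmf_map)
  qed
  then have "map_pmf (\<lambda>x. R `` {x}) \<nu> = map_pmf (\<lambda>x. R `` {x}) \<mu>"
    by (rule pmf_eqI)
  with \<nu> show "\<exists>\<nu>. coop_step I y \<nu> \<and> map_pmf (\<lambda>x. R `` {x}) \<nu> = map_pmf (\<lambda>x. R `` {x}) \<mu>"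
    by blast
qed

lemma pmf_map_pmf_finite:
  fixes \<mu> :: "'s::finite pmf"
  shows "pmf (map_pmf f \<mu>) z = (\<Sum>y | f y = z. pmf \<mu> y)"
  by (simp add: pmf_map measure_measure_pmf_finite vimage_def)

definition lumped_prob :: "('s \<Rightarrow> 'b) \<Rightarrow> 's \<Rightarrow> ('s list \<Rightarrow> 's pmf) \<Rightarrow> 'b list \<Rightarrow> real" where
  "lumped_prob f s K c = (\<Sum>\<omega> | map f \<omega> = c. prefix_prob s K \<omega>)"

lemma finite_lists_map_eq: "finite {\<omega> :: 's::finite list. map f \<omega> = c}"
proof -
  have "{\<omega>. map f \<omega> = c} \<subseteq> {\<omega>. set \<omega> \<subseteq> UNIV \<and> length \<omega> = length c}"
    by auto
  then show ?thesis
    using finite_lists_length_eq[of "UNIV :: 's set"] finite_subset by auto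
qed

lemma lumped_prob_nonneg: "lumped_prob f s K c \<ge> 0"
  unfolding lumped_prob_def by (intro sum_nonneg prefix_prob_nonneg)

lemma lumped_prob_singleton: "lumped_prob f s K [z] = of_bool (f s = z)"
  for s :: "'s::finite"
proof -
  have "{\<omega>. map f \<omega> = [z]} = (\<lambda>y. [y]) ` {y. f y = z}"
    by (auto simp: length_Suc_conv)
  then have "lumped_prob f s K [z] = (\<Sum>y | f y = z. of_bool (y = s))"
    unfolding lumped_prob_def by (simp add: sum.reindex inj_on_def)
  also have "\<dots> = of_bool (f s = z)"
    by (cases "f s = z") (auto simp: sum.delta)
  finally show ?thesis .
qed

lemma lumped_prob_snoc:
  fixes s :: "'s::finite"
  assumes "c \<noteq> []"
  shows "lumped_prob f s K (c @ [z])
    = (\<Sum>\<omega> | map f \<omega> = c. prefix_prob s K \<omega> * pmf (map_pmf f (K \<omega>)) z)"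
proof -
  let ?A = "{\<omega>. map f \<omega> = c}" and ?B = "{y. f y = z}"
  have "{\<omega>. map f \<omega> = c @ [z]} = (\<lambda>(\<omega>, y). \<omega> @ [y]) ` (?A \<times> ?B)"
  proof (intro equalityI subsetI)
    fix w
    assume "w \<in> {\<omega>. map f \<omega> = c @ [z]}"
    then show "w \<in> (\<lambda>(\<omega>, y). \<omega> @ [y]) ` (?A \<times> ?B)"
      by (cases w rule: rev_cases) (auto simp: image_iff)
  qed auto
  moreover have "inj_on (\<lambda>(\<omega>, y). \<omega> @ [y]) (?A \<times> ?B)"
    by (auto simp: inj_on_def)
  ultimately have "lumped_prob f s K (c @ [z]) = (\<Sum>(\<omega>, y)\<in>?A \<times> ?B. prefix_prob s K (\<omega> @ [y]))"
    unfolding lumped_prob_def by (simp add: sum.reindex split_def)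
  also have "\<dots> = (\<Sum>\<omega>\<in>?A. \<Sum>y\<in>?B. prefix_prob s K (\<omega> @ [y]))"
    by (rule sum.cartesian_product[symmetric])
  also have "\<dots> = (\<Sum>\<omega>\<in>?A. prefix_prob s K \<omega> * pmf (map_pmf f (K \<omega>)) z)"
  proof (intro sum.cong refl)
    fix \<omega>
    assume "\<omega> \<in> ?A"
    with assms have "\<omega> \<noteq> []" by auto
    then show "(\<Sum>y\<in>?B. prefix_prob s K (\<omega> @ [y])) = prefix_prob s K \<omega> * pmf (map_pmf f (K \<omega>)) z"
      by (simp add: prefix_prob_snoc pmf_map_pmf_finite sum_distrib_left)
  qed
  finally show ?thesis .
qed

lemma lumped_prob_snoc_eq_0:
  fixes s :: "'s::finite"
  assumes "c \<noteq> []" "lumped_prob f s K c = 0"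
  shows "lumped_prob f s K (c @ [z]) = 0"
proof -
  have "\<forall>\<omega>\<in>{\<omega>. map f \<omega> = c}. prefix_prob s K \<omega> = 0"
    using assms(2) unfolding lumped_prob_def
    by (subst (asm) sum_nonneg_eq_0_iff) (auto simp: finite_lists_map_eq prefix_prob_nonneg)
  then show ?thesis
    by (simp add: lumped_prob_snoc[OF assms(1)])
qed

lemma lumped_successor_exists:
  fixes I :: "'s::finite \<Rightarrow> 'a::finite \<Rightarrow> 's \<Rightarrow> real set"
  assumes lump: "coop_lumpable I f"
    and K: "\<And>\<omega>. \<omega> \<noteq> [] \<Longrightarrow> coop_step I (last \<omega>) (K \<omega>)"
    and h: "h \<noteq> []" and pos: "lumped_prob f s K (map f h) > 0"
  shows "\<exists>\<nu>. coop_step I (last h) \<nu> \<and> (\<forall>z. pmf (map_pmf f \<nu>) z =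
    (\<Sum>\<omega> | map f \<omega> = map f h. prefix_prob s K \<omega> * pmf (map_pmf f (K \<omega>)) z)
      / lumped_prob f s K (map f h))"
proof -
  define A where "A = {\<omega>. map f \<omega> = map f h}"
  define q where "q = lumped_prob f s K (map f h)"
  have "\<exists>\<nu>. coop_step I (last h) \<nu> \<and> map_pmf f \<nu> = map_pmf f (K \<omega>)" if "\<omega> \<in> A" for \<omega>
  proof -
    have "\<omega> \<noteq> []" "map f \<omega> = map f h"
      using that h by (auto simp: A_def)
    then have "f (last \<omega>) = f (last h)"
      using h by (metis last_map)
    with \<open>\<omega> \<noteq> []\<close> K lump show ?thesis
      unfolding coop_lumpable_def by blast
  qed
  then obtain \<nu> where \<nu>: "\<And>\<omega>. \<omega> \<in> A \<Longrightarrow>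
      coop_step I (last h) (\<nu> \<omega>) \<and> map_pmf f (\<nu> \<omega>) = map_pmf f (K \<omega>)"
    by metis
  have "(\<Sum>\<omega>\<in>A. prefix_prob s K \<omega> / q) = 1"
    using pos by (simp add: A_def q_def lumped_prob_def flip: sum_divide_distrib)
  then have "\<exists>\<nu>'. coop_step I (last h) \<nu>' \<and>
      (\<forall>y. pmf \<nu>' y = (\<Sum>\<omega>\<in>A. prefix_prob s K \<omega> / q * pmf (\<nu> \<omega>) y))"
    using \<nu> pos prefix_prob_nonneg
    by (intro coop_step_mixture) (auto simp: A_def q_def finite_lists_map_eq zero_le_divide_iff)
  then obtain \<nu>' where \<nu>': "coop_step I (last h) \<nu>'"
    "\<And>y. pmf \<nu>' y = (\<Sum>\<omega>\<in>A. prefix_prob s K \<omega> / q * pmf (\<nu> \<omega>) y)"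
    by blast
  have "pmf (map_pmf f \<nu>') z = (\<Sum>\<omega>\<in>A. prefix_prob s K \<omega> * pmf (map_pmf f (K \<omega>)) z) / q" for z
  proof -
    have "pmf (map_pmf f \<nu>') z = (\<Sum>y | f y = z. \<Sum>\<omega>\<in>A. prefix_prob s K \<omega> / q * pmf (\<nu> \<omega>) y)"
      by (simp add: pmf_map_pmf_finite \<nu>')
    also have "\<dots> = (\<Sum>\<omega>\<in>A. prefix_prob s K \<omega> / q * pmf (map_pmf f (\<nu> \<omega>)) z)"
      by (subst sum.swap) (simp add: pmf_map_pmf_finite sum_distrib_left)
    also have "\<dots> = (\<Sum>\<omega>\<in>A. prefix_prob s K \<omega> / q * pmf (map_pmf f (K \<omega>)) z)"
      using \<nu> by (intro sum.cong) auto
    finally show ?thesis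
      by (simp add: sum_divide_distrib)
  qed
  with \<nu>' show ?thesis
    unfolding A_def q_def by blast
qed

lemma lumped_matching_kernel:
  fixes I :: "'s::finite \<Rightarrow> 'a::finite \<Rightarrow> 's \<Rightarrow> real set"
  assumes imdp: "is_IMDP I" and lump: "coop_lumpable I f"
    and K: "\<And>\<omega>. \<omega> \<noteq> [] \<Longrightarrow> coop_step I (last \<omega>) (K \<omega>)"
    and st: "f s = f t"
  shows "\<exists>K'. (\<forall>h. h \<noteq> [] \<longrightarrow> coop_step I (last h) (K' h)) \<and>
    (\<forall>c. c \<noteq> [] \<longrightarrow> lumped_prob f t K' c = lumped_prob f s K c)"
proof -
  \<comment> \<open>D c is the distribution of the next class given the class history c.\<close>
  define D where "D c z = (\<Sum>\<omega> | map f \<omega> = c. prefix_prob s K \<omega> * pmf (map_pmf f (K \<omega>)) z)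
    / lumped_prob f s K c" for c z
  define good where "good h \<nu> \<longleftrightarrow> coop_step I (last h) \<nu> \<and>
    (lumped_prob f s K (map f h) > 0 \<longrightarrow> (\<forall>z. pmf (map_pmf f \<nu>) z = D (map f h) z))" for h \<nu>
  have "\<exists>\<nu>. good h \<nu>" if "h \<noteq> []" for h
    using lumped_successor_exists[OF lump K that] coop_step_exists[OF imdp]
    by (cases "lumped_prob f s K (map f h) > 0") (auto simp: good_def D_def)
  then obtain K' where K': "\<And>h. h \<noteq> [] \<Longrightarrow> good h (K' h)"
    by metis
  have "lumped_prob f t K' c = lumped_prob f s K c" if "c \<noteq> []" for c
    using that
  proof (induction c rule: rev_induct)
    case (snoc z c)
    show ?case
    proof (cases "c = []")
      case True
      with st show ?thesis
        by (simp add: lumped_prob_singleton)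
    next
      case False
      with snoc.IH have IH: "lumped_prob f t K' c = lumped_prob f s K c"
        by blast
      show ?thesis
      proof (cases "lumped_prob f s K c > 0")
        case True
        have "pmf (map_pmf f (K' h)) z = D c z" if "map f h = c" for h
          using K'[of h] True that \<open>c \<noteq> []\<close> by (auto simp: good_def)
        then have "lumped_prob f t K' (c @ [z]) = (\<Sum>\<omega> | map f \<omega> = c. prefix_prob t K' \<omega> * D c z)"
          unfolding lumped_prob_snoc[OF \<open>c \<noteq> []\<close>] by (intro sum.cong) auto
        also have "\<dots> = lumped_prob f t K' c * D c z"
          by (simp add: lumped_prob_def sum_distrib_right)
        also have "\<dots> = lumped_prob f s K (c @ [z])"
          using IH True by (simp add: D_def lumped_prob_snoc[OF \<open>c \<noteq> []\<close>])
        finally show ?thesis .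
      next
        case False
        then have "lumped_prob f s K c = 0"
          using lumped_prob_nonneg[of f s K c] by simp
        with IH show ?thesis
          using lumped_prob_snoc_eq_0[OF \<open>c \<noteq> []\<close>] by metis
      qed
    qed
  qed simp
  with K' show ?thesis
    by (auto simp: good_def)
qed

section \<open>Lumped path measures\<close>

lemma measurable_smap_Pr:
  fixes \<sigma> :: "('s::finite, 'a::finite) scheduler"
  shows "smap f \<in> measurable (Pr s \<sigma> \<pi>) (stream_space (count_space UNIV))"
  using measurable_cong_sets[OF sets_Pr refl]
    measurable_smap[OF measurable_count_space[of f UNIV]] by blast

lemma emeasure_distr_smap_sstart:
  fixes \<sigma> :: "('s::finite, 'a::finite) scheduler"
  assumes "c \<noteq> []"
  shows "emeasure (distr (Pr s \<sigma> \<pi>) (stream_space (count_space UNIV)) (smap f)) (sstart UNIV c)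
    = ennreal (lumped_prob f s (sched_kernel \<sigma> \<pi>) c)"
proof -
  interpret prob_space "Pr s \<sigma> \<pi>"
    by (rule prob_space_Pr)
  have "smap f -` sstart UNIV c = (\<Union>\<omega>\<in>{\<omega>. map f \<omega> = c}. Cyl \<omega>)"
    by (auto simp: Cyl_def stake_smap simp flip: Cyl_eq_sstart)
  moreover have "measure (Pr s \<sigma> \<pi>) (\<Union>\<omega>\<in>{\<omega>. map f \<omega> = c}. Cyl \<omega>)
      = (\<Sum>\<omega> | map f \<omega> = c. measure (Pr s \<sigma> \<pi>) (Cyl \<omega>))"
  proof (rule finite_measure_finite_Union)
    show "Cyl ` {\<omega>. map f \<omega> = c} \<subseteq> sets (Pr s \<sigma> \<pi>)"
      by (auto simp: sets_Pr)
    show "disjoint_family_on Cyl {\<omega>. map f \<omega> = c}"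
      unfolding disjoint_family_on_def Cyl_def by (auto dest: map_eq_imp_length_eq)
  qed (simp add: finite_lists_map_eq)
  moreover have "(\<Sum>\<omega> | map f \<omega> = c. measure (Pr s \<sigma> \<pi>) (Cyl \<omega>))
      = lumped_prob f s (sched_kernel \<sigma> \<pi>) c"
    unfolding lumped_prob_def using assms by (intro sum.cong refl measure_Pr_Cyl) auto
  ultimately show ?thesis
    by (simp add: emeasure_distr[OF measurable_smap_Pr] sstart_sets space_Pr emeasure_eq_measure)
qed

lemma distr_smap_Pr_eq:
  fixes \<sigma> \<sigma>' :: "('s::finite, 'a::finite) scheduler" and f :: "'s \<Rightarrow> 'b::countable"
  assumes "\<And>c. c \<noteq> [] \<Longrightarrow>
    lumped_prob f s (sched_kernel \<sigma> \<pi>) c = lumped_prob f t (sched_kernel \<sigma>' \<pi>') c"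
  shows "distr (Pr s \<sigma> \<pi>) (stream_space (count_space UNIV)) (smap f)
    = distr (Pr t \<sigma>' \<pi>') (stream_space (count_space UNIV)) (smap f)"
proof (rule stream_space_eq_sstart[of UNIV])
  show "prob_space (distr (Pr s \<sigma> \<pi>) (stream_space (count_space UNIV)) (smap f))"
    "prob_space (distr (Pr t \<sigma>' \<pi>') (stream_space (count_space UNIV)) (smap f))"
    by (rule prob_space.prob_space_distr[OF prob_space_Pr measurable_smap_Pr])+
qed (simp_all add: assms emeasure_distr_smap_sstart)

text \<open>An f-invariant event is the f-preimage of its image under a right inverse of f, which is
  measurable because every map between countable discrete spaces is.\<close>

lemma measure_eq_if_distr_smap_eq:
  fixes f :: "'s \<Rightarrow> 'b"
  assumes M: "sets M = sets (stream_space (count_space UNIV))"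
    and N: "sets N = sets (stream_space (count_space UNIV))"
    and eq: "distr M (stream_space (count_space UNIV)) (smap f)
      = distr N (stream_space (count_space UNIV)) (smap f)"
    and E: "E \<in> sets (stream_space (count_space UNIV))"
    and inv: "\<And>w w'. smap f w = smap f w' \<Longrightarrow> w \<in> E \<Longrightarrow> w' \<in> E"
  shows "measure M E = measure N E"
proof -
  define F where "F = smap (inv f) -` E"
  have retract: "smap f (smap (inv f) (smap f w)) = smap f w" for w
    by (simp add: stream.map_comp comp_def f_inv_into_f[OF rangeI])
  have EF: "E = smap f -` F"
  proof (intro equalityI subsetI)
    fix w
    assume "w \<in> E"
    then show "w \<in> smap f -` F"
      using inv[OF retract[symmetric]] by (simp add: F_def)
  next
    fix w
    assume "w \<in> smap f -` F"
    then show "w \<in> E"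
      using inv[OF retract] by (simp add: F_def)
  qed
  have F: "F \<in> sets (stream_space (count_space UNIV))"
    using measurable_sets[OF measurable_smap[OF measurable_count_space[of "inv f" UNIV]] E]
    by (simp add: F_def space_stream_space)
  have space: "space M = UNIV" "space N = UNIV"
    using sets_eq_imp_space_eq[OF M] sets_eq_imp_space_eq[OF N]
    by (simp_all add: space_stream_space)
  have meas: "smap f \<in> measurable M (stream_space (count_space UNIV))"
    "smap f \<in> measurable N (stream_space (count_space UNIV))"
    unfolding measurable_cong_sets[OF M refl] measurable_cong_sets[OF N refl]
    by (rule measurable_smap[OF measurable_count_space])+
  show ?thesis
    using measure_distr[OF meas(1) F] measure_distr[OF meas(2) F] eq
    by (simp add: EF space)
qed

lemma lumped_equivalent_resolution:
  fixes I :: "'s::finite \<Rightarrow> 'a::finite \<Rightarrow> 's \<Rightarrow> real set"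
    and \<sigma> :: "('s, 'a) scheduler" and f :: "'s \<Rightarrow> 'b::countable"
  assumes imdp: "is_IMDP I" and lump: "coop_lumpable I f"
    and st: "f s = f t" and \<pi>: "\<pi> \<in> natures I"
  shows "\<exists>(\<sigma>' :: ('s, 'a) scheduler) \<pi>'. \<pi>' \<in> natures I \<and>
    distr (Pr t \<sigma>' \<pi>') (stream_space (count_space UNIV)) (smap f)
      = distr (Pr s \<sigma> \<pi>) (stream_space (count_space UNIV)) (smap f)"
proof -
  have "\<And>\<omega>. \<omega> \<noteq> [] \<Longrightarrow> coop_step I (last \<omega>) (sched_kernel \<sigma> \<pi> \<omega>)"
    by (rule coop_step_sched_kernel[OF imdp \<pi>])
  then obtain K' where K': "\<And>h. h \<noteq> [] \<Longrightarrow> coop_step I (last h) (K' h)"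
    "\<And>c. c \<noteq> [] \<Longrightarrow> lumped_prob f t K' c = lumped_prob f s (sched_kernel \<sigma> \<pi>) c"
    using lumped_matching_kernel[OF imdp lump _ st] by blast
  obtain \<sigma>' :: "('s, 'a) scheduler" and \<pi>' where \<pi>': "\<pi>' \<in> natures I"
    and kernel: "sched_kernel \<sigma>' \<pi>' = K'"
    using sched_kernel_of_coop_kernel[OF imdp K'(1)] by blast
  have "distr (Pr t \<sigma>' \<pi>') (stream_space (count_space UNIV)) (smap f)
      = distr (Pr s \<sigma> \<pi>) (stream_space (count_space UNIV)) (smap f)"
    by (rule distr_smap_Pr_eq) (simp add: kernel K'(2))
  with \<pi>' show ?thesis
    by blast
qed

section \<open>Invariance of PCTL\<close>

lemma measurable_pred_snth [measurable]:
  "Measurable.pred (stream_space (count_space UNIV)) (\<lambda>w. P (w !! j))"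
  by (rule measurable_compose[OF measurable_snth measurable_count_space])

lemma sets_sat_path:
  "{w. sat_path I L w \<psi>} \<in> sets (stream_space (count_space UNIV))"
proof -
  have "Measurable.pred (stream_space (count_space UNIV)) (\<lambda>w. sat_path I L w \<psi>)"
    by (cases \<psi>) (simp only: sat_path.simps, measurable)+
  then show ?thesis
    by (simp add: Measurable.pred_def space_stream_space)
qed

lemma sat_Prob_transfer:
  fixes I :: "'s::finite \<Rightarrow> 'a::finite \<Rightarrow> 's \<Rightarrow> real set" and f :: "'s \<Rightarrow> 'b::countable"
  assumes imdp: "is_IMDP I" and lump: "coop_lumpable I f" and xy: "f x = f y"
    and inv: "\<And>w w'. smap f w = smap f w' \<Longrightarrow> sat_path I L w \<psi> \<longleftrightarrow> sat_path I L w' \<psi>"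
    and sat: "sat_state I L x (Prob c p \<psi>)"
  shows "sat_state I L y (Prob c p \<psi>)"
proof -
  let ?E = "{w. sat_path I L w \<psi>}"
  have inv_E: "\<And>w w'. smap f w = smap f w' \<Longrightarrow> w \<in> ?E \<Longrightarrow> w' \<in> ?E"
    using inv by blast
  have "cmp_holds c (measure (Pr y \<sigma>' \<pi>') ?E) (of_rat p)"
    if \<pi>': "\<pi>' \<in> natures I" for \<sigma>' :: "('s, 'a) scheduler" and \<pi>'
  proof -
    have "\<exists>(\<sigma> :: ('s, 'a) scheduler) \<pi>. \<pi> \<in> natures I \<and>
        distr (Pr x \<sigma> \<pi>) (stream_space (count_space UNIV)) (smap f)
          = distr (Pr y \<sigma>' \<pi>') (stream_space (count_space UNIV)) (smap f)"
      by (rule lumped_equivalent_resolution[OF imdp lump xy[symmetric] \<pi>'])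
    then obtain \<sigma> :: "('s, 'a) scheduler" and \<pi> where \<pi>: "\<pi> \<in> natures I"
      and eq: "distr (Pr x \<sigma> \<pi>) (stream_space (count_space UNIV)) (smap f)
        = distr (Pr y \<sigma>' \<pi>') (stream_space (count_space UNIV)) (smap f)"
      by blast
    have "measure (Pr x \<sigma> \<pi>) ?E = measure (Pr y \<sigma>' \<pi>') ?E"
      by (rule measure_eq_if_distr_smap_eq[OF sets_Pr sets_Pr eq sets_sat_path inv_E])
    moreover have "cmp_holds c (measure (Pr x \<sigma> \<pi>) ?E) (of_rat p)"
      using sat \<pi> unfolding sat_state.simps by blast
    ultimately show ?thesis
      by simp
  qed
  then show ?thesis
    unfolding sat_state.simps by blast
qed

lemma sat_invariant_under_lumping:
  fixes I :: "'s::finite \<Rightarrow> 'a::finite \<Rightarrow> 's \<Rightarrow> real set" and f :: "'s \<Rightarrow> 'b::countable"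
  assumes imdp: "is_IMDP I" and lump: "coop_lumpable I f"
    and label: "\<And>x y. f x = f y \<Longrightarrow> L x = L y"
  shows "f x = f y \<Longrightarrow> sat_state I L x \<phi> \<longleftrightarrow> sat_state I L y \<phi>"
    and "smap f w = smap f w' \<Longrightarrow> sat_path I L w \<psi> \<longleftrightarrow> sat_path I L w' \<psi>"
proof (induction \<phi> and \<psi> arbitrary: x y and w w')
  case TT
  show ?case by simp
next
  case (Atom a)
  show ?case
    using label[OF Atom.prems] by simp
next
  case (Neg \<phi>)
  show ?case
    using Neg.IH[OF Neg.prems] by simp
next
  case (And \<phi>1 \<phi>2)
  show ?case
    using And.IH(1)[OF And.prems] And.IH(2)[OF And.prems] by simp
next
  case (Prob c p \<psi>)
  show ?case
    using sat_Prob_transfer[OF imdp lump Prob.prems Prob.IH]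
      sat_Prob_transfer[OF imdp lump Prob.prems[symmetric] Prob.IH] by blast
next
  case (Next \<phi>)
  have "f (w !! 1) = f (w' !! 1)"
    using arg_cong[OF Next.prems, of "\<lambda>v. v !! 1"] by simp
  from Next.IH[OF this] show ?case
    by simp
next
  case (Until \<phi>1 \<phi>2)
  have "f (w !! n) = f (w' !! n)" for n
    using arg_cong[OF Until.prems, of "\<lambda>v. v !! n"] by simp
  then have "sat_state I L (w !! n) \<phi>1 \<longleftrightarrow> sat_state I L (w' !! n) \<phi>1"
    "sat_state I L (w !! n) \<phi>2 \<longleftrightarrow> sat_state I L (w' !! n) \<phi>2" for n
    using Until.IH by blast+
  then show ?case
    by simp
next
  case (BUntil \<phi>1 k \<phi>2)
  have "f (w !! n) = f (w' !! n)" for n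
    using arg_cong[OF BUntil.prems, of "\<lambda>v. v !! n"] by simp
  then have "sat_state I L (w !! n) \<phi>1 \<longleftrightarrow> sat_state I L (w' !! n) \<phi>1"
    "sat_state I L (w !! n) \<phi>2 \<longleftrightarrow> sat_state I L (w' !! n) \<phi>2" for n
    using BUntil.IH by blast+
  then show ?case
    by simp
qed

theorem theorem1:
  fixes I :: "'s::finite \<Rightarrow> 'a::finite \<Rightarrow> 's \<Rightarrow> real set"
    and L :: "'s \<Rightarrow> 'ap set"
    and s t :: 's
    and \<phi> :: "'ap state_formula"
  assumes "is_IMDP I"
    and "forall_bisimilar I L s t"
    and "wf_state \<phi>"
  shows "sat_state I L s \<phi> \<longleftrightarrow> sat_state I L t \<phi>"
  \<comment> \<open>The bounds of the probability operators need not lie in [0,1].\<close>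
proof -
  obtain R where R: "forall_bisimulation I L R" and st: "(s, t) \<in> R"
    using assms(2) unfolding forall_bisimilar_def by blast
  have eqv: "equiv UNIV R"
    using R by (simp add: forall_bisimulation_def)
  have "L x = L y" if "R `` {x} = R `` {y}" for x y
  proof -
    from that have "(x, y) \<in> R"
      by (simp add: eq_equiv_class_iff[OF eqv])
    with R show ?thesis
      unfolding forall_bisimulation_def by blast
  qed
  moreover have "R `` {s} = R `` {t}"
    using st by (simp add: eq_equiv_class_iff[OF eqv])
  ultimately show ?thesis
    using sat_invariant_under_lumping(1)[OF assms(1) forall_bisimulation_lumpable[OF R]] by blast
qed

end
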